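(* Let $\bm{X}\in\mathbb{R}^{d\times n}$, $1\le K\le\min\{n,d\}$, $h(\bm{P},\bm{Q})=-\langle\bm{P},\bm{X}^T\bm{Q}\rangle+\delta_{\mathcal{B}(n,K)}(\bm{P})+\delta_{{\rm St}(d,K)}(\bm{Q})$, and for $\beta>0$ let $\Psi_\beta(\bm{P},\bm{Q},\bm{Q}')=h(\bm{P},\bm{Q})+\frac\beta2\|\bm{Q}-\bm{Q}'\|_F^2$. If $(\bm{P},\bm{Q},\bm{Q}')\in\mathcal{B}(n,K)\times{\rm St}(d,K)\times\mathbb{R}^{d\times K}$ is a limiting critical point of $\Psi_\beta$, then $\bm{Q}=\bm{Q}'$. Moreover, $(\bm{P},\bm{Q},\bm{Q})$ is a limiting critical point of $\Psi_\beta$ if and only if $(\bm{P},\bm{Q})$ is a limiting critical point of $h$.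
   Context: ${\rm St}(d,K)=\{\bm{Q}\in\mathbb{R}^{d\times K}:\bm{Q}^T\bm{Q}=\bm{I}_K\}$; $\mathcal{B}(n,K)$ is the set of $n\times K$ matrices with entries in $\{\pm1\}$; $\langle\bm{A},\bm{B}\rangle=\operatorname{tr}(\bm{A}^T\bm{B})$; $\delta_{\mathcal{S}}$ is the indicator function. A limiting critical point of a proper lower semicontinuous function $f$ is a point $\bm{x}$ with $\bm{0}\in\partial f(\bm{x})$, where $\partial$ is the limiting subdifferential. *)

theory Defs
  imports "HOL-Analysis.Analysis"
begin

definition indic :: "'a set \<Rightarrow> 'a \<Rightarrow> ereal" where
  "indic S x = (if x \<in> S then 0 else \<infinity>)"

definition stiefel :: "(real^'k^'d) set" where
  "stiefel = {Q. transpose Q ** Q = mat 1}"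

definition sign_mats :: "(real^'k^'n) set" where
  "sign_mats = {P. \<forall>i j. P $ i $ j = 1 \<or> P $ i $ j = -1}"

text \<open>Frechet (regular) subdifferential of a proper extended-real function:
  v is a regular subgradient at x iff f x is finite and
  liminf_{y -> x, y ~= x} (f y - f x - <v, y - x>) / norm (y - x) >= 0,
  written out with epsilon/delta.\<close>
definition frechet_subdiff :: "('a::euclidean_space \<Rightarrow> ereal) \<Rightarrow> 'a \<Rightarrow> 'a set" where
  "frechet_subdiff f x = {v. \<bar>f x\<bar> \<noteq> \<infinity> \<and>
     (\<forall>e>0. \<exists>d>0. \<forall>y. norm (y - x) < d \<longrightarrow>
        f y \<ge> f x + ereal (v \<bullet> (y - x) - e * norm (y - x)))}"

definition limiting_subdiff :: "('a::euclidean_space \<Rightarrow> ereal) \<Rightarrow> 'a \<Rightarrow> 'a set" where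
  "limiting_subdiff f x = {v. \<bar>f x\<bar> \<noteq> \<infinity> \<and>
     (\<exists>xs vs. xs \<longlonglongrightarrow> x \<and> (\<lambda>k. f (xs k)) \<longlonglongrightarrow> f x \<and>
        (\<forall>k. vs k \<in> frechet_subdiff f (xs k)) \<and> vs \<longlonglongrightarrow> v)}"

definition limiting_critical :: "('a::euclidean_space \<Rightarrow> ereal) \<Rightarrow> 'a \<Rightarrow> bool" where
  "limiting_critical f x \<longleftrightarrow> 0 \<in> limiting_subdiff f x"

text \<open>h(P,Q) = -<P, X^T Q> + delta_B(P) + delta_St(Q); inner product on matrices
  is the Frobenius inner product tr(A^T B).\<close>
definition hfun :: "real^'n^'d \<Rightarrow> (real^'k^'n) \<times> (real^'k^'d) \<Rightarrow> ereal" where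
  "hfun X PQ = ereal (- (fst PQ \<bullet> (transpose X ** snd PQ)))
      + indic sign_mats (fst PQ) + indic stiefel (snd PQ)"

definition Psi :: "real^'n^'d \<Rightarrow> real \<Rightarrow>
    ((real^'k^'n) \<times> (real^'k^'d)) \<times> (real^'k^'d) \<Rightarrow> ereal" where
  "Psi X \<beta> z = hfun X (fst z) + ereal (\<beta> / 2 * (norm (snd (fst z) - snd z))\<^sup>2)"

end

theory Submission
  imports Defs
begin

text \<open>The coupling term of \<open>\<Psi>\<^sub>\<beta>\<close> is smooth in \<open>Q'\<close>, so the \<open>Q'\<close>-component of every Frechet
  subgradient of \<open>\<Psi>\<^sub>\<beta>\<close> at \<open>(P, Q, Q')\<close> is the gradient \<open>\<beta> (Q' - Q)\<close>; passing to the limit,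
  \<open>0\<close> can only be a limiting subgradient if \<open>Q = Q'\<close>. Restricting \<open>\<Psi>\<^sub>\<beta>\<close> to the affine set
  \<open>{(P, Q + H, Q' + H)}\<close>, on which the coupling term is constant, turns a subgradient \<open>(U, V, W)\<close>
  of \<open>\<Psi>\<^sub>\<beta>\<close> into the subgradient \<open>(U, V + W)\<close> of \<open>h\<close>. Conversely, \<open>(P, Q, Q') \<mapsto> h (P, Q)\<close> is
  a minorant of \<open>\<Psi>\<^sub>\<beta>\<close> touching it on the diagonal \<open>Q' = Q\<close>, so \<open>(U, V, 0)\<close> is a subgradient
  of \<open>\<Psi>\<^sub>\<beta>\<close> there whenever \<open>(U, V)\<close> is one of \<open>h\<close>. Nothing here uses the structure of \<open>h\<close>.\<close>

lemma frechet_subdiff_compose_linear: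
  fixes F :: "'b::euclidean_space \<Rightarrow> ereal" and A :: "'a::euclidean_space \<Rightarrow> 'b"
  assumes "linear A" and v: "v \<in> frechet_subdiff F y0" and adj: "\<And>h. v \<bullet> A h = u \<bullet> h"
  shows "u \<in> frechet_subdiff (\<lambda>x. F (y0 + A (x - x0))) x0"
proof -
  obtain B where B: "B > 0" and bound: "\<And>h. norm (A h) \<le> B * norm h"
    using linear_bounded_pos[OF \<open>linear A\<close>] by blast
  have sub: "\<forall>e>0. \<exists>d>0. \<forall>y. norm (y - y0) < d \<longrightarrow>
      F y \<ge> F y0 + ereal (v \<bullet> (y - y0) - e * norm (y - y0))"
    using v unfolding frechet_subdiff_def by simp
  have "\<exists>d>0. \<forall>x. norm (x - x0) < d \<longrightarrow>
      F (y0 + A (x - x0)) \<ge> F y0 + ereal (u \<bullet> (x - x0) - e * norm (x - x0))" if "e > 0" for e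
  proof -
    have "e / B > 0" using \<open>e > 0\<close> B by simp
    then obtain d where "d > 0" and d: "\<And>y. norm (y - y0) < d \<Longrightarrow>
        F y \<ge> F y0 + ereal (v \<bullet> (y - y0) - e / B * norm (y - y0))"
      using sub by blast
    have "F (y0 + A (x - x0)) \<ge> F y0 + ereal (u \<bullet> (x - x0) - e * norm (x - x0))"
      if "norm (x - x0) < d / B" for x
    proof -
      have "norm (A (x - x0)) < d"
        using bound[of "x - x0"] that B by (simp add: field_simps)
      then have "F (y0 + A (x - x0)) \<ge> F y0 + ereal (u \<bullet> (x - x0) - e / B * norm (A (x - x0)))"
        using d[of "y0 + A (x - x0)"] by (simp add: adj)
      moreover have "e / B * norm (A (x - x0)) \<le> e * norm (x - x0)"
        using bound[of "x - x0"] B \<open>e > 0\<close> by (simp add: field_simps)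
      then have "F y0 + ereal (u \<bullet> (x - x0) - e * norm (x - x0))
          \<le> F y0 + ereal (u \<bullet> (x - x0) - e / B * norm (A (x - x0)))"
        by (intro add_left_mono) simp
      ultimately show ?thesis
        by order
    qed
    then show ?thesis
      using \<open>d > 0\<close> B by (intro exI[of _ "d / B"]) auto
  qed
  then show ?thesis
    using v linear_0[OF \<open>linear A\<close>] unfolding frechet_subdiff_def by simp
qed

lemma frechet_subdiff_add_const:
  "frechet_subdiff (\<lambda>x. f x + ereal c) x = frechet_subdiff f x"
proof -
  have "f y + ereal c \<ge> f x + ereal c + ereal r \<longleftrightarrow> f y \<ge> f x + ereal r" for y r
    by (cases "f x"; cases "f y") auto
  moreover have "\<bar>f x + ereal c\<bar> \<noteq> \<infinity> \<longleftrightarrow> \<bar>f x\<bar> \<noteq> \<infinity>"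
    by (cases "f x") auto
  ultimately show ?thesis
    unfolding frechet_subdiff_def by simp
qed

lemma frechet_subdiff_mono_touching:
  assumes "\<And>y. f y \<le> g y" and "f x = g x"
  shows "frechet_subdiff f x \<subseteq> frechet_subdiff g x"
proof
  fix v assume "v \<in> frechet_subdiff f x"
  then show "v \<in> frechet_subdiff g x"
    unfolding frechet_subdiff_def using assms by simp (meson order_trans)
qed

lemma frechet_subgradient_eq_gradient:
  assumes deriv: "GDERIV \<phi> x :> g" and v: "v \<in> frechet_subdiff (\<lambda>y. ereal (\<phi> y)) x"
  shows "v = g"
proof -
  have small: "norm (v - g) \<le> 2 * e" if "e > 0" for e
  proof (cases "v = g")
    case False
    obtain d1 where "d1 > 0" and d1: "\<And>y. norm (y - x) < d1 \<Longrightarrow>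
        norm (\<phi> y - \<phi> x - (y - x) \<bullet> g) \<le> e * norm (y - x)"
      using deriv \<open>e > 0\<close> unfolding gderiv_def has_derivative_at_alt by blast
    have sub: "\<forall>e>0. \<exists>d>0. \<forall>y. norm (y - x) < d \<longrightarrow>
        \<phi> y \<ge> \<phi> x + (v \<bullet> (y - x) - e * norm (y - x))"
      using v unfolding frechet_subdiff_def by simp
    obtain d2 where "d2 > 0" and d2: "\<And>y. norm (y - x) < d2 \<Longrightarrow>
        \<phi> y \<ge> \<phi> x + (v \<bullet> (y - x) - e * norm (y - x))"
      using sub \<open>e > 0\<close> by blast
    define w where "w = v - g"
    define t where "t = min d1 d2 / (2 * norm w)"
    have "w \<noteq> 0" "t > 0"
      using False \<open>d1 > 0\<close> \<open>d2 > 0\<close> by (auto simp: w_def t_def)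
    moreover have "norm (t *\<^sub>R w) = min d1 d2 / 2"
      using \<open>t > 0\<close> \<open>w \<noteq> 0\<close> \<open>d1 > 0\<close> \<open>d2 > 0\<close> by (simp add: t_def)
    ultimately have "norm (t *\<^sub>R w) < d1" "norm (t *\<^sub>R w) < d2"
      using \<open>d1 > 0\<close> \<open>d2 > 0\<close> by linarith+
    moreover have step: "(x + t *\<^sub>R w) - x = t *\<^sub>R w"
      by simp
    ultimately have "(t *\<^sub>R w) \<bullet> v - (t *\<^sub>R w) \<bullet> g \<le> 2 * e * norm (t *\<^sub>R w)"
      using d1[of "x + t *\<^sub>R w", unfolded step real_norm_def]
        d2[of "x + t *\<^sub>R w", unfolded step] inner_commute[of v "t *\<^sub>R w"]
      by linarith
    moreover have "(t *\<^sub>R w) \<bullet> v - (t *\<^sub>R w) \<bullet> g = (t *\<^sub>R w) \<bullet> w"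
      by (simp add: w_def inner_diff_right)
    moreover have "(t *\<^sub>R w) \<bullet> w = t * (norm w)\<^sup>2"
      by (simp add: power2_norm_eq_inner)
    ultimately have "t * (norm w)\<^sup>2 \<le> t * (2 * e * norm w)"
      using \<open>t > 0\<close> by simp
    then have "norm w * norm w \<le> 2 * e * norm w"
      using \<open>t > 0\<close> by (simp add: power2_eq_square)
    then show ?thesis
      using \<open>w \<noteq> 0\<close> by (simp add: w_def)
  qed (use \<open>e > 0\<close> in simp)
  have "norm (v - g) \<le> 0"
  proof (rule field_le_epsilon)
    fix e :: real
    assume "e > 0"
    then show "norm (v - g) \<le> 0 + e"
      using small[of "e / 2"] by simp
  qed
  then show ?thesis
    by simp
qed

lemma limiting_subdiffI:
  assumes "\<bar>f x\<bar> \<noteq> \<infinity>" and "xs \<longlonglongrightarrow> x" and "(\<lambda>k. f (xs k)) \<longlonglongrightarrow> f x"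
    and "\<And>k. vs k \<in> frechet_subdiff f (xs k)" and "vs \<longlonglongrightarrow> v"
  shows "v \<in> limiting_subdiff f x"
  using assms unfolding limiting_subdiff_def by blast

lemma limiting_subdiffE:
  assumes "v \<in> limiting_subdiff f x"
  obtains xs vs where "\<bar>f x\<bar> \<noteq> \<infinity>" and "xs \<longlonglongrightarrow> x" and "(\<lambda>k. f (xs k)) \<longlonglongrightarrow> f x"
    and "\<And>k. vs k \<in> frechet_subdiff f (xs k)" and "vs \<longlonglongrightarrow> v"
  using assms unfolding limiting_subdiff_def by auto

definition penalized_lift :: "('a::euclidean_space \<times> 'b::euclidean_space \<Rightarrow> ereal) \<Rightarrow> real \<Rightarrow>
    ('a \<times> 'b) \<times> 'b \<Rightarrow> ereal" where
  "penalized_lift f \<beta> z = f (fst z) + ereal (\<beta> / 2 * (norm (snd (fst z) - snd z))\<^sup>2)"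

lemma Psi_eq_penalized_lift: "Psi X \<beta> = penalized_lift (hfun X) \<beta>"
  by (simp add: fun_eq_iff Psi_def penalized_lift_def)

lemma penalized_lift_finite_iff:
  "\<bar>penalized_lift f \<beta> z\<bar> \<noteq> \<infinity> \<longleftrightarrow> \<bar>f (fst z)\<bar> \<noteq> \<infinity>"
  unfolding penalized_lift_def by (cases "f (fst z)") auto

lemma GDERIV_half_sq_dist: "GDERIV (\<lambda>t. c + \<beta> / 2 * (norm (q - t))\<^sup>2) t :> \<beta> *\<^sub>R (t - q)"
  unfolding gderiv_def power2_norm_eq_inner
  by (rule derivative_eq_intros refl
      | simp add: fun_eq_iff inner_diff_left inner_diff_right inner_commute algebra_simps)+

lemma frechet_subdiff_penalized_lift_snd:
  assumes v: "v \<in> frechet_subdiff (penalized_lift f \<beta>) ((a, q), q')"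
  shows "snd v = \<beta> *\<^sub>R (q' - q)"
proof -
  have "linear (\<lambda>h. (0, h))"
    by (simp add: linear_iff)
  then have "snd v \<in> frechet_subdiff (\<lambda>t. penalized_lift f \<beta> (((a, q), q') + (0, t - q'))) q'"
    using v by (rule frechet_subdiff_compose_linear) (cases v; simp)
  moreover obtain r where "f (a, q) = ereal r"
    using v penalized_lift_finite_iff[of f \<beta> "((a, q), q')"] unfolding frechet_subdiff_def by force
  ultimately have "snd v \<in> frechet_subdiff (\<lambda>t. ereal (r + \<beta> / 2 * (norm (q - t))\<^sup>2)) q'"
    by (simp add: penalized_lift_def)
  then show ?thesis
    by (rule frechet_subgradient_eq_gradient[OF GDERIV_half_sq_dist])
qed

lemma frechet_subdiff_penalized_lift_imp:
  assumes w: "((wa, wq), wq') \<in> frechet_subdiff (penalized_lift f \<beta>) ((a, q), q')"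
  shows "(wa, wq + wq') \<in> frechet_subdiff f (a, q)"
proof -
  have "linear (\<lambda>h. (h, snd h))"
    by (simp add: linear_iff)
  then have "(wa, wq + wq') \<in> frechet_subdiff
      (\<lambda>y. penalized_lift f \<beta> (((a, q), q') + (y - (a, q), snd (y - (a, q))))) (a, q)"
    using w by (rule frechet_subdiff_compose_linear) (auto simp: inner_add_left)
  moreover have "penalized_lift f \<beta> (((a, q), q') + (y - (a, q), snd (y - (a, q))))
      = f y + ereal (\<beta> / 2 * (norm (q - q'))\<^sup>2)" for y
    by (cases y) (simp add: penalized_lift_def algebra_simps)
  ultimately show ?thesis
    by (simp add: frechet_subdiff_add_const)
qed

lemma frechet_subdiff_imp_penalized_lift:
  assumes "\<beta> \<ge> 0" and v: "v \<in> frechet_subdiff f z"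
  shows "(v, 0) \<in> frechet_subdiff (penalized_lift f \<beta>) (z, snd z)"
proof -
  have "linear (fst :: _ \<times> 'b::euclidean_space \<Rightarrow> _)"
    by (simp add: linear_iff)
  then have "(v, 0 :: 'b) \<in> frechet_subdiff (\<lambda>p. f (z + fst (p - (z, snd z)))) (z, snd z)"
    using v by (rule frechet_subdiff_compose_linear) (simp add: inner_prod_def)
  also have "\<dots> \<subseteq> frechet_subdiff (penalized_lift f \<beta>) (z, snd z)"
    using \<open>\<beta> \<ge> 0\<close>
    by (intro frechet_subdiff_mono_touching) (simp_all add: penalized_lift_def ereal_le_add_self)
  finally show ?thesis .
qed

lemma limiting_subdiff_penalized_lift_snd:
  assumes "v \<in> limiting_subdiff (penalized_lift f \<beta>) ((a, q), q')"
  shows "snd v = \<beta> *\<^sub>R (q' - q)"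
proof -
  obtain xs vs where "\<bar>penalized_lift f \<beta> ((a, q), q')\<bar> \<noteq> \<infinity>" and xs: "xs \<longlonglongrightarrow> ((a, q), q')"
    and "(\<lambda>k. penalized_lift f \<beta> (xs k)) \<longlonglongrightarrow> penalized_lift f \<beta> ((a, q), q')"
    and vs: "\<And>k. vs k \<in> frechet_subdiff (penalized_lift f \<beta>) (xs k)" and vs_lim: "vs \<longlonglongrightarrow> v"
    using assms by (rule limiting_subdiffE) (rule that)
  have "snd (vs k) = \<beta> *\<^sub>R (snd (xs k) - snd (fst (xs k)))" for k
    using frechet_subdiff_penalized_lift_snd[of "vs k" f \<beta> "fst (fst (xs k))"] vs[of k] by simp
  moreover have "(\<lambda>k. \<beta> *\<^sub>R (snd (xs k) - snd (fst (xs k))))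
      \<longlonglongrightarrow> \<beta> *\<^sub>R (snd ((a, q), q') - snd (fst ((a, q), q')))"
    by (intro tendsto_intros xs)
  ultimately have "(\<lambda>k. snd (vs k)) \<longlonglongrightarrow> \<beta> *\<^sub>R (q' - q)"
    by simp
  moreover have "(\<lambda>k. snd (vs k)) \<longlonglongrightarrow> snd v"
    using vs_lim by (rule tendsto_snd)
  ultimately show ?thesis
    using LIMSEQ_unique by blast
qed

lemma limiting_subdiff_penalized_lift_imp:
  assumes "((wa, wq), wq') \<in> limiting_subdiff (penalized_lift f \<beta>) ((a, q), q')"
  shows "(wa, wq + wq') \<in> limiting_subdiff f (a, q)"
proof -
  let ?F = "penalized_lift f \<beta>"
  obtain xs vs where fin: "\<bar>?F ((a, q), q')\<bar> \<noteq> \<infinity>" and xs: "xs \<longlonglongrightarrow> ((a, q), q')"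
    and val: "(\<lambda>k. ?F (xs k)) \<longlonglongrightarrow> ?F ((a, q), q')"
    and vs: "\<And>k. vs k \<in> frechet_subdiff ?F (xs k)" and vs_lim: "vs \<longlonglongrightarrow> ((wa, wq), wq')"
    using assms by (rule limiting_subdiffE) (rule that)
  define c where "c y = \<beta> / 2 * (norm (snd (fst y) - snd y))\<^sup>2" for y :: "('a \<times> 'b) \<times> 'b"
  have f_eq: "f (fst y) = ?F y + ereal (- c y)" for y
    by (cases "f (fst y)") (simp_all add: penalized_lift_def c_def)
  have "(\<lambda>k. ereal (- c (xs k))) \<longlonglongrightarrow> ereal (- c ((a, q), q'))"
    unfolding c_def lim_ereal by (intro tendsto_intros xs)
  with fin val have "(\<lambda>k. ?F (xs k) + ereal (- c (xs k)))
      \<longlonglongrightarrow> ?F ((a, q), q') + ereal (- c ((a, q), q'))"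
    by (intro tendsto_add_ereal) simp_all
  then have val_f: "(\<lambda>k. f (fst (xs k))) \<longlonglongrightarrow> f (a, q)"
    unfolding f_eq[symmetric] by simp
  have vs_lim': "(\<lambda>k. (fst (fst (vs k)), snd (fst (vs k)) + snd (vs k)))
      \<longlonglongrightarrow> (fst (fst ((wa, wq), wq')), snd (fst ((wa, wq), wq')) + snd ((wa, wq), wq'))"
    by (intro tendsto_intros vs_lim)
  show ?thesis
  proof (rule limiting_subdiffI)
    show "\<bar>f (a, q)\<bar> \<noteq> \<infinity>"
      using fin by (simp add: penalized_lift_finite_iff)
    show "(\<lambda>k. fst (xs k)) \<longlonglongrightarrow> (a, q)"
      using tendsto_fst[OF xs] by simp
    show "(\<lambda>k. f (fst (xs k))) \<longlonglongrightarrow> f (a, q)"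
      by (fact val_f)
    show "(fst (fst (vs k)), snd (fst (vs k)) + snd (vs k)) \<in> frechet_subdiff f (fst (xs k))" for k
      using frechet_subdiff_penalized_lift_imp[of "fst (fst (vs k))" "snd (fst (vs k))" "snd (vs k)"
          f \<beta> "fst (fst (xs k))" "snd (fst (xs k))" "snd (xs k)"] vs[of k] by simp
    show "(\<lambda>k. (fst (fst (vs k)), snd (fst (vs k)) + snd (vs k))) \<longlonglongrightarrow> (wa, wq + wq')"
      using vs_lim' by simp
  qed
qed

lemma limiting_subdiff_imp_penalized_lift:
  assumes "\<beta> \<ge> 0" and "v \<in> limiting_subdiff f z"
  shows "(v, 0) \<in> limiting_subdiff (penalized_lift f \<beta>) (z, snd z)"
proof -
  obtain xs vs where fin: "\<bar>f z\<bar> \<noteq> \<infinity>" and xs: "xs \<longlonglongrightarrow> z"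
    and val: "(\<lambda>k. f (xs k)) \<longlonglongrightarrow> f z"
    and vs: "\<And>k. vs k \<in> frechet_subdiff f (xs k)" and vs_lim: "vs \<longlonglongrightarrow> v"
    using assms(2) by (rule limiting_subdiffE) (rule that)
  have diag: "penalized_lift f \<beta> (y, snd y) = f y" for y
    by (simp add: penalized_lift_def)
  show ?thesis
  proof (rule limiting_subdiffI)
    show "\<bar>penalized_lift f \<beta> (z, snd z)\<bar> \<noteq> \<infinity>"
      unfolding diag by (fact fin)
    show "(\<lambda>k. (xs k, snd (xs k))) \<longlonglongrightarrow> (z, snd z)"
      by (intro tendsto_intros xs)
    show "(\<lambda>k. penalized_lift f \<beta> (xs k, snd (xs k))) \<longlonglongrightarrow> penalized_lift f \<beta> (z, snd z)"
      using val by (simp only: diag)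
    show "(vs k, 0) \<in> frechet_subdiff (penalized_lift f \<beta>) (xs k, snd (xs k))" for k
      using frechet_subdiff_imp_penalized_lift[OF \<open>\<beta> \<ge> 0\<close> vs] .
    show "(\<lambda>k. (vs k, 0)) \<longlonglongrightarrow> (v, 0)"
      by (intro tendsto_intros vs_lim)
  qed
qed

theorem lemma2:
  fixes X :: "real^'n^'d" and P :: "real^'k^'n" and Q Q' :: "real^'k^'d" and \<beta> :: real
  assumes "CARD('k) \<le> CARD('n)" and "CARD('k) \<le> CARD('d)"
    and "\<beta> > 0"
    and "P \<in> sign_mats" and "Q \<in> stiefel"
  shows "(limiting_critical (Psi X \<beta>) ((P, Q), Q') \<longrightarrow> Q = Q') \<and>
         (limiting_critical (Psi X \<beta>) ((P, Q), Q) \<longleftrightarrow> limiting_critical (hfun X) (P, Q))"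
proof (intro conjI impI iffI)
  show "Q = Q'" if "limiting_critical (Psi X \<beta>) ((P, Q), Q')"
    using limiting_subdiff_penalized_lift_snd[of 0 "hfun X" \<beta> P Q Q'] that \<open>\<beta> > 0\<close>
    by (simp add: limiting_critical_def Psi_eq_penalized_lift)
  show "limiting_critical (hfun X) (P, Q)" if "limiting_critical (Psi X \<beta>) ((P, Q), Q)"
    using limiting_subdiff_penalized_lift_imp[of 0 0 0] that
    by (simp add: limiting_critical_def Psi_eq_penalized_lift zero_prod_def)
  show "limiting_critical (Psi X \<beta>) ((P, Q), Q)" if "limiting_critical (hfun X) (P, Q)"
    using limiting_subdiff_imp_penalized_lift[of \<beta> 0 "hfun X" "(P, Q)"] that \<open>\<beta> > 0\<close>
    by (simp add: limiting_critical_def Psi_eq_penalized_lift zero_prod_def)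
qed

end
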